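(* Assume the standing setup below. Let $x\in X$ (so $x\ne y$) and let $s\le t$ be phase change numbers of $X$ with $s_1\le s$. Suppose that $[x]_{s,Y}=[x]_{t,Y}$ (i.e. $(s,[x]_{s,Y})\to(t,[x]_{t,Y})$ is a partial layer of $Y$) and that $y\in[x]_{s,Y}$. Then $[x]_{s,X}=[x]_{t,X}$, i.e. $(s,[x]_{s,X})\to(t,[x]_{t,X})$ is a partial layer of $X$.
   Context: For a finite set $Z\subset\mathbb{R}^n$ and a real number $s\ge 0$, the Vietoris–Rips complex $V_s(Z)$ is the simplicial complex with vertex set $Z$ whose simplices are the nonempty subsets $\sigma\subseteq Z$ with $d(z,z')\le s$ for all $z,z'\in\sigma$ ($d$ the Euclidean distance). For $z\in Z$, $[z]_{s,Z}\subseteq Z$ denotes the set of vertices of the path component of $V_s(Z)$ containing $z$. A partial layer for $Z$ is a pair of parameters $s\le t$ and $z\in Z$ (written as an edge $(s,[z]_{s,Z})\to(t,[z]_{t,Z})$) with $[z]_{s,Z}=[z]_{t,Z}$ as subsets of $Z$. Standing setup: $X\subset\mathbb{R}^n$ is a finite set with at least two points, $y\in\mathbb{R}^n\setminus X$, $Y=X\sqcup\{y\}$. The phase change numbers of $X$ are the distinct values $0=s_0<s_1<\dots<s_k$ of $d(x,x')$ for $x,x'\in X$. There are $x_0\in X$ and a real $r>0$ with $d(y,x_0)<r$ and $r<s_{i+1}-s_i$ for all $0\le i<k$. *)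

theory Defs
  imports "HOL-Analysis.Analysis"
begin

definition VR :: "real \<Rightarrow> 'a::euclidean_space set \<Rightarrow> 'a set set" where
  "VR s Z = {\<sigma>. \<sigma> \<noteq> {} \<and> \<sigma> \<subseteq> Z \<and> (\<forall>z\<in>\<sigma>. \<forall>z'\<in>\<sigma>. dist z z' \<le> s)}"

text \<open>Vertices of the path component of V_s(Z) containing z: vertices reachable
  from z by an edge path, i.e. a chain of 1-simplices of V_s(Z).\<close>
definition vr_component :: "real \<Rightarrow> 'a::euclidean_space set \<Rightarrow> 'a \<Rightarrow> 'a set" where
  "vr_component s Z z = {w. (z, w) \<in> ({(u, v). {u, v} \<in> VR s Z})\<^sup>*}"

definition phase_numbers :: "'a::euclidean_space set \<Rightarrow> real set" where
  "phase_numbers X = {dist x x' | x x'. x \<in> X \<and> x' \<in> X}"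

definition s1 :: "'a::euclidean_space set \<Rightarrow> real" where
  "s1 X = Min (phase_numbers X - {0})"

end

theory Submission
  imports Defs
begin

text \<open>Collapsing the new point y onto x0 sends edge paths of V_s(X \<union> {y}) to edge paths of
  V_s(X), as long as every point of X within s of y is also within s of x0. Since y is
  r-close to x0 and consecutive phase change numbers of X are more than r apart, this holds
  whenever s is a phase change number. Hence on X the components of X \<union> {y} and of X agree at
  scale s, and growing the scale to t can only enlarge components; so a partial layer of
  X \<union> {y} through x restricts to one of X.\<close>

lemma doubleton_in_VR_iff:
  "{u, v} \<in> VR s Z \<longleftrightarrow> u \<in> Z \<and> v \<in> Z \<and> dist u v \<le> s \<and> 0 \<le> s"
  unfolding VR_def by (auto simp: dist_commute)

lemma vr_component_mono:
  assumes "s \<le> t" and "Z \<subseteq> Z'"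
  shows "vr_component s Z z \<subseteq> vr_component t Z' z"
proof -
  have "{(u, v). {u, v} \<in> VR s Z} \<subseteq> {(u, v). {u, v} \<in> VR t Z'}"
    using assms by (auto simp: doubleton_in_VR_iff)
  then show ?thesis
    unfolding vr_component_def by (auto dest: rtrancl_mono[THEN subsetD])
qed

lemma vr_component_subset:
  assumes "z \<in> Z"
  shows "vr_component s Z z \<subseteq> Z"
proof
  fix w assume "w \<in> vr_component s Z z"
  then have "(z, w) \<in> {(u, v). {u, v} \<in> VR s Z}\<^sup>*"
    unfolding vr_component_def by simp
  then show "w \<in> Z"
    using assms by (cases rule: rtranclE) (auto simp: doubleton_in_VR_iff)
qed

lemma rtrancl_image_pair:
  assumes "(a, b) \<in> R\<^sup>*" and "\<And>u v. (u, v) \<in> R \<Longrightarrow> (f u, f v) \<in> S"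
  shows "(f a, f b) \<in> S\<^sup>*"
  using assms(1)
proof (induction rule: rtrancl_induct)
  case (step v w)
  then show ?case using assms(2) by (meson rtrancl_into_rtrancl)
qed simp

lemma vr_component_insert_collapse:
  assumes "y \<notin> X" and "x0 \<in> X" and "z \<in> X"
    and near: "\<And>v. v \<in> X \<Longrightarrow> dist v y \<le> s \<Longrightarrow> dist v x0 \<le> s"
  shows "vr_component s (insert y X) z \<inter> X \<subseteq> vr_component s X z"
proof
  fix w assume w: "w \<in> vr_component s (insert y X) z \<inter> X"
  define f where "f = (\<lambda>u. if u = y then x0 else u)"
  have "(z, w) \<in> {(u, v). {u, v} \<in> VR s (insert y X)}\<^sup>*"
    using w unfolding vr_component_def by simp
  then have "(f z, f w) \<in> {(u, v). {u, v} \<in> VR s X}\<^sup>*"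
  proof (rule rtrancl_image_pair)
    fix u v assume "(u, v) \<in> {(u, v). {u, v} \<in> VR s (insert y X)}"
    then have "u \<in> insert y X" "v \<in> insert y X" "dist u v \<le> s" "0 \<le> s"
      by (auto simp: doubleton_in_VR_iff)
    then show "(f u, f v) \<in> {(u, v). {u, v} \<in> VR s X}"
      using near[of u] near[of v] assms(2)
      by (auto simp: doubleton_in_VR_iff f_def dist_commute)
  qed
  moreover have "f z = z" "f w = w"
    using assms(1,3) w by (auto simp: f_def)
  ultimately show "w \<in> vr_component s X z"
    unfolding vr_component_def by simp
qed

lemma phase_number_gap_near:
  assumes "x0 \<in> X" and "dist y x0 < r"
    and gap: "\<forall>a\<in>phase_numbers X. \<forall>b\<in>phase_numbers X. a < b \<longrightarrow> r < b - a"
    and "s \<in> phase_numbers X" and "v \<in> X" and "dist v y \<le> s"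
  shows "dist v x0 \<le> s"
proof (rule ccontr)
  assume "\<not> dist v x0 \<le> s"
  moreover have "dist v x0 \<in> phase_numbers X"
    using assms(1,5) unfolding phase_numbers_def by auto
  ultimately have "r < dist v x0 - s"
    using gap assms(4) by auto
  moreover have "dist v x0 \<le> dist v y + dist y x0"
    by (rule dist_triangle)
  ultimately show False
    using assms(2,6) by linarith
qed

theorem corollary14:
  fixes X :: "'a::euclidean_space set" and y x x0 :: 'a and r s t :: real
  assumes "finite X" and "card X \<ge> 2"
    and "y \<notin> X"
    and "x0 \<in> X" and "r > 0" and "dist y x0 < r"
    and "\<forall>a\<in>phase_numbers X. \<forall>b\<in>phase_numbers X. a < b \<longrightarrow> r < b - a"
    and "x \<in> X"
    and "s \<in> phase_numbers X" and "t \<in> phase_numbers X" and "s \<le> t"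
    and "s1 X \<le> s"
    and "vr_component s (insert y X) x = vr_component t (insert y X) x"
    and "y \<in> vr_component s (insert y X) x"
  shows "vr_component s X x = vr_component t X x"
proof
  show "vr_component s X x \<subseteq> vr_component t X x"
    using assms(11) by (rule vr_component_mono) simp
  have "vr_component t X x \<subseteq> vr_component t (insert y X) x \<inter> X"
    using vr_component_mono[of t t X "insert y X"] vr_component_subset[OF assms(8)] by auto
  also have "\<dots> = vr_component s (insert y X) x \<inter> X"
    using assms(13) by simp
  also have "\<dots> \<subseteq> vr_component s X x"
    using assms(3,4,8) phase_number_gap_near[OF assms(4,6,7,9)]
    by (rule vr_component_insert_collapse)
  finally show "vr_component t X x \<subseteq> vr_component s X x" .
qed

end
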